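(* In the option framework described in the context, let the intra-option policies $\pi_o(s,a,\theta)$ be differentiable in $\theta$, and for a vector $\eta$ (of the same dimension as $\theta$) define the compatible function approximator $f^{\pi_o}_\eta(s,a)=\eta^T\frac{\partial\ln\pi_o(s,a,\theta)}{\partial\theta}$ and the squared error $$\epsilon(\eta,\theta)=\sum_{s,o,a}\mu_{\mathcal O}(s,o)\pi_o(s,a,\theta)\big(f^{\pi_o}_\eta(s,a)-a_U(s,o,a)\big)^2 .$$ Let $G_\theta=\sum_{s,o}\mu_{\mathcal O}(s,o)\sum_a\pi_o(s,a,\theta)\frac{\partial\ln\pi_o(s,a,\theta)}{\partial\theta}\big(\frac{\partial\ln\pi_o(s,a,\theta)}{\partial\theta}\big)^T$ (assumed invertible). If $\tilde\eta$ is a local minimum of $\epsilon(\cdot,\theta)$, then $$G_\theta^{-1}\frac{\partial q_{\pi_{\mathcal O}}(s_0,o_0)}{\partial\theta}=\tilde\eta,$$ i.e. $\tilde\eta$ is the natural gradient of the expected discounted return with respect to $\theta$.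
   Context: Finite MDP with states $\mathcal S$, actions $\mathcal A$, transition function $P$, discount $\gamma$; finite option set $\mathcal O$ with intra-option policies $\pi_o(s,a,\theta)$, terminations $\beta_o(s)$ and a policy over options $\pi_{\mathcal O}(s,o)$; in state $s_t$ with option $o_t$ the agent draws $a_t\sim\pi_{o_t}(s_t,\cdot,\theta)$, moves to $s_{t+1}$, and $o_t$ terminates there with probability $\beta_{o_t}(s_{t+1})$, after which a new option is drawn from $\pi_{\mathcal O}(s_{t+1},\cdot)$. Value functions (expected discounted returns): $q_{\pi_{\mathcal O}}(s,o)$ given $S_0=s,O_0=o$; $q_U(s,o,a)$ given $S_0=s,O_0=o,A_0=a$; state-option-action advantage $a_U(s,o,a)=q_U(s,o,a)-q_{\pi_{\mathcal O}}(s,o)$. $\mu_{\mathcal O}(s,o)=\sum_{t\ge0}\gamma^t\Pr(S_t=s,O_t=o\mid s_0,o_0)$ is the discounted weighting of state-option pairs from the start pair $(s_0,o_0)$ (treated as the stationary distribution of the process that terminates with probability $1-\gamma$ per step). The gradient $\partial q_{\pi_{\mathcal O}}(s_0,o_0)/\partial\theta$ is given by the intra-option policy gradient theorem: $\frac{\partial q_{\pi_{\mathcal O}}(s_0,o_0)}{\partial\theta}=\sum_{s,o}\mu_{\mathcal O}(s,o)\sum_a\frac{\partial\pi_o(s,a,\theta)}{\partial\theta}q_U(s,o,a)$. *)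

theory Defs
  imports "HOL-Analysis.Analysis"
begin

text \<open>Option framework at parameter vector theta :: real^'n.
  pol o s a theta : intra-option policy; dpi o s a theta : its gradient in theta.
  States 's, options 'o, actions 'a are finite types.\<close>

definition grad_log_pi ::
  "('o \<Rightarrow> 's \<Rightarrow> 'a \<Rightarrow> real^'n \<Rightarrow> real) \<Rightarrow> ('o \<Rightarrow> 's \<Rightarrow> 'a \<Rightarrow> real^'n \<Rightarrow> real^'n)
   \<Rightarrow> 'o \<Rightarrow> 's \<Rightarrow> 'a \<Rightarrow> real^'n \<Rightarrow> real^'n" where
  "grad_log_pi pol dpi o' s a \<theta> = (1 / pol o' s a \<theta>) *\<^sub>R dpi o' s a \<theta>"

definition compat_fa ::
  "('o \<Rightarrow> 's \<Rightarrow> 'a \<Rightarrow> real^'n \<Rightarrow> real) \<Rightarrow> ('o \<Rightarrow> 's \<Rightarrow> 'a \<Rightarrow> real^'n \<Rightarrow> real^'n)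
   \<Rightarrow> real^'n \<Rightarrow> real^'n \<Rightarrow> 'o \<Rightarrow> 's \<Rightarrow> 'a \<Rightarrow> real" where
  "compat_fa pol dpi \<eta> \<theta> o' s a = \<eta> \<bullet> grad_log_pi pol dpi o' s a \<theta>"

text \<open>Squared error epsilon(eta, theta); mu, qU, qO are the weighting and value functions at theta,
  and the advantage is a_U(s,o,a) = q_U(s,o,a) - q_{pi_O}(s,o).\<close>
definition sq_err ::
  "('s \<Rightarrow> 'o \<Rightarrow> real) \<Rightarrow> ('s \<Rightarrow> 'o \<Rightarrow> 'a \<Rightarrow> real) \<Rightarrow> ('s \<Rightarrow> 'o \<Rightarrow> real)
   \<Rightarrow> ('o \<Rightarrow> 's \<Rightarrow> 'a \<Rightarrow> real^'n \<Rightarrow> real) \<Rightarrow> ('o \<Rightarrow> 's \<Rightarrow> 'a \<Rightarrow> real^'n \<Rightarrow> real^'n)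
   \<Rightarrow> real^'n \<Rightarrow> real^'n \<Rightarrow> real" where
  "sq_err mu qU qO pol dpi \<eta> \<theta> =
     (\<Sum>s\<in>UNIV. \<Sum>o'\<in>UNIV. \<Sum>a\<in>UNIV. mu s o' * pol o' s a \<theta> *
        (compat_fa pol dpi \<eta> \<theta> o' s a - (qU s o' a - qO s o'))\<^sup>2)"

definition fisher_G ::
  "('s \<Rightarrow> 'o \<Rightarrow> real) \<Rightarrow> ('o \<Rightarrow> 's \<Rightarrow> 'a \<Rightarrow> real^'n \<Rightarrow> real) \<Rightarrow> ('o \<Rightarrow> 's \<Rightarrow> 'a \<Rightarrow> real^'n \<Rightarrow> real^'n)
   \<Rightarrow> real^'n \<Rightarrow> real^'n^'n" where
  "fisher_G mu pol dpi \<theta> = (\<chi> i j. \<Sum>s\<in>UNIV. \<Sum>o'\<in>UNIV. mu s o' * (\<Sum>a\<in>UNIV. pol o' s a \<theta> *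
      (grad_log_pi pol dpi o' s a \<theta> $ i) * (grad_log_pi pol dpi o' s a \<theta> $ j)))"

end

theory Submission
  imports Defs
begin

text \<open>Since \<open>\<Sum>\<^sub>a \<pi>\<^sub>o(s,a,\<theta>) = 1\<close> for every \<open>\<theta>\<close>, the gradients
  \<open>\<partial>\<pi>\<^sub>o(s,a,\<theta>)/\<partial>\<theta>\<close> sum to zero over \<open>a\<close>; hence the baseline \<open>q\<^sub>\<pi>\<^sub>O(s,o)\<close> can be
  subtracted from \<open>q\<^sub>U\<close> in the intra-option policy gradient, which becomes the
  \<open>\<mu>\<^sub>O \<pi>\<^sub>o\<close>-weighted sum of advantage times score \<open>\<psi> = \<partial>ln \<pi>\<^sub>o/\<partial>\<theta>\<close>.
  The error \<open>\<epsilon>(\<cdot>,\<theta>)\<close> is a weighted least-squares problem with features \<open>\<psi>\<close> and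
  targets \<open>a\<^sub>U\<close>, so at a local minimum its gradient vanishes, i.e. the normal
  equations \<open>G\<^sub>\<theta> \<eta> = \<Sum> \<mu>\<^sub>O \<pi>\<^sub>o a\<^sub>U \<psi>\<close> hold. Both right-hand sides agree, so
  \<open>G\<^sub>\<theta> \<eta> = \<partial>q/\<partial>\<theta>\<close>.\<close>

lemma matrix_inv_left:
  fixes A :: "'a::semiring_1^'n^'m"
  assumes "invertible A"
  shows "matrix_inv A ** A = mat 1"
  using assms unfolding invertible_def matrix_inv_def by (rule someI_ex[THEN conjunct2])

lemma matrix_inv_mult_vector_eq:
  fixes A :: "'a::comm_semiring_1^'n^'m"
  assumes "invertible A" and "A *v x = b"
  shows "matrix_inv A *v b = x"
  by (metis assms matrix_inv_left matrix_vector_mul_assoc matrix_vector_mul_lid)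

lemma sum_gradients_eq_0_if_sum_const:
  fixes f :: "'i \<Rightarrow> 'a::real_inner \<Rightarrow> real"
  assumes deriv: "\<And>i. i \<in> I \<Longrightarrow> (f i has_derivative (\<lambda>h. d i \<bullet> h)) (at x)"
    and const: "\<And>y. (\<Sum>i\<in>I. f i y) = c"
  shows "(\<Sum>i\<in>I. d i) = 0"
proof -
  have "((\<lambda>y. \<Sum>i\<in>I. f i y) has_derivative (\<lambda>h. (\<Sum>i\<in>I. d i) \<bullet> h)) (at x)"
    using has_derivative_sum[of I f "\<lambda>i h. d i \<bullet> h"] deriv by (simp add: inner_sum_left)
  then have "(\<lambda>h. (\<Sum>i\<in>I. d i) \<bullet> h) = (\<lambda>h. 0)"
    by (rule has_derivative_local_min) (simp add: const)
  then show ?thesis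
    by (metis inner_eq_zero_iff)
qed

lemma least_squares_normal_equation:
  fixes x :: "'i \<Rightarrow> 'a::real_inner"
  assumes min: "eventually (\<lambda>\<eta>. (\<Sum>k\<in>I. w k * (\<eta>0 \<bullet> x k - y k)\<^sup>2) \<le> (\<Sum>k\<in>I. w k * (\<eta> \<bullet> x k - y k)\<^sup>2)) (at \<eta>0)"
  shows "(\<Sum>k\<in>I. (w k * (\<eta>0 \<bullet> x k - y k)) *\<^sub>R x k) = 0"
    (is "?v = 0")
proof -
  have "((\<lambda>\<eta>. \<Sum>k\<in>I. w k * (\<eta> \<bullet> x k - y k)\<^sup>2) has_derivative (\<lambda>h. 2 * (?v \<bullet> h))) (at \<eta>0)"
  proof -
    have "((\<lambda>\<eta>. \<Sum>k\<in>I. w k * (\<eta> \<bullet> x k - y k)\<^sup>2) has_derivative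
        (\<lambda>h. \<Sum>k\<in>I. w k * (2 * (\<eta>0 \<bullet> x k - y k) * (h \<bullet> x k)))) (at \<eta>0)"
      by (auto intro!: derivative_eq_intros ext sum.cong simp: power2_eq_square algebra_simps)
    moreover have "(\<lambda>h. \<Sum>k\<in>I. w k * (2 * (\<eta>0 \<bullet> x k - y k) * (h \<bullet> x k))) = (\<lambda>h. 2 * (?v \<bullet> h))"
      unfolding inner_sum_left sum_distrib_left
      by (intro ext sum.cong refl) (simp add: inner_commute)
    ultimately show ?thesis by simp
  qed
  then have "(\<lambda>h. 2 * (?v \<bullet> h)) = (\<lambda>h. 0)"
    using min by (rule has_derivative_local_min)
  then have "2 * (?v \<bullet> ?v) = 0"
    by (rule fun_cong)
  then show ?thesis
    by simp
qed

lemma weighted_gram_matrix_mult_vector: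
  fixes x :: "'i \<Rightarrow> real^'n"
  shows "(\<chi> i j. \<Sum>k\<in>I. w k * x k $ i * x k $ j) *v \<eta> = (\<Sum>k\<in>I. (w k * (\<eta> \<bullet> x k)) *\<^sub>R x k)"
  by (simp add: vec_eq_iff matrix_vector_mult_def inner_vec_def
      sum_distrib_left sum_distrib_right mult_ac sum.swap[of _ UNIV I])

lemma sum_scaleR_eq_sum_baseline_score:
  fixes d :: "'i \<Rightarrow> 'a::real_vector"
  assumes "\<And>a. a \<in> A \<Longrightarrow> p a \<noteq> 0" and "(\<Sum>a\<in>A. d a) = 0"
  shows "(\<Sum>a\<in>A. q a *\<^sub>R d a) = (\<Sum>a\<in>A. (p a * (q a - b)) *\<^sub>R ((1 / p a) *\<^sub>R d a))"
proof -
  have "(\<Sum>a\<in>A. (p a * (q a - b)) *\<^sub>R ((1 / p a) *\<^sub>R d a)) = (\<Sum>a\<in>A. (q a - b) *\<^sub>R d a)"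
    using assms(1) by (intro sum.cong) auto
  also have "\<dots> = (\<Sum>a\<in>A. q a *\<^sub>R d a) - b *\<^sub>R (\<Sum>a\<in>A. d a)"
    by (simp add: scaleR_diff_left sum_subtractf scaleR_sum_right)
  finally show ?thesis
    by (simp add: assms(2))
qed

lemma intra_option_gradient_advantage_form:
  assumes "\<And>o' s a. pol o' s a \<theta> \<noteq> 0" and "\<And>o' s. (\<Sum>a\<in>UNIV. dpi o' s a \<theta>) = 0"
  shows "(\<Sum>s\<in>UNIV. \<Sum>o'\<in>UNIV. mu s o' *\<^sub>R (\<Sum>a\<in>UNIV. qU s o' a *\<^sub>R dpi o' s a \<theta>)) =
    (\<Sum>s\<in>UNIV. \<Sum>o'\<in>UNIV. \<Sum>a\<in>UNIV.
      (mu s o' * pol o' s a \<theta> * (qU s o' a - qO s o')) *\<^sub>R grad_log_pi pol dpi o' s a \<theta>)"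
proof -
  have "(\<Sum>a\<in>UNIV. qU s o' a *\<^sub>R dpi o' s a \<theta>) =
      (\<Sum>a\<in>UNIV. (pol o' s a \<theta> * (qU s o' a - qO s o')) *\<^sub>R grad_log_pi pol dpi o' s a \<theta>)" for s o'
    unfolding grad_log_pi_def by (rule sum_scaleR_eq_sum_baseline_score) (use assms in auto)
  then show ?thesis
    by (simp only: scaleR_sum_right scaleR_scaleR mult.assoc)
qed

lemma sum_UNIV_prod3:
  "(\<Sum>k\<in>UNIV. f k) = (\<Sum>s\<in>UNIV. \<Sum>o'\<in>UNIV. \<Sum>a\<in>UNIV. f (s, o', a))"
  by (simp add: sum.cartesian_product)

theorem mainTheorem5:
  fixes pol :: "'o::finite \<Rightarrow> 's::finite \<Rightarrow> 'a::finite \<Rightarrow> real^'n \<Rightarrow> real"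
    and dpi :: "'o \<Rightarrow> 's \<Rightarrow> 'a \<Rightarrow> real^'n \<Rightarrow> real^'n"
    and mu :: "real^'n \<Rightarrow> 's \<Rightarrow> 'o \<Rightarrow> real"
    and qU :: "real^'n \<Rightarrow> 's \<Rightarrow> 'o \<Rightarrow> 'a \<Rightarrow> real"
    and qO :: "real^'n \<Rightarrow> 's \<Rightarrow> 'o \<Rightarrow> real"
    and dq :: "real^'n"
    and \<theta> \<eta>t :: "real^'n" and s0 :: 's and o0 :: 'o
  assumes pi_pos: "\<And>o' s a th. pol o' s a th > 0"
    and pi_sum: "\<And>o' s th. (\<Sum>a\<in>UNIV. pol o' s a th) = 1"
    and pi_diff: "\<And>o' s a th. ((\<lambda>x. pol o' s a x) has_derivative (\<lambda>h. dpi o' s a th \<bullet> h)) (at th)"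
    and q_diff: "((\<lambda>x. qO x s0 o0) has_derivative (\<lambda>h. dq \<bullet> h)) (at \<theta>)"
    and pg_thm: "dq = (\<Sum>s\<in>UNIV. \<Sum>o'\<in>UNIV. mu \<theta> s o' *\<^sub>R
                        (\<Sum>a\<in>UNIV. qU \<theta> s o' a *\<^sub>R dpi o' s a \<theta>))"
    and G_inv: "invertible (fisher_G (mu \<theta>) pol dpi \<theta>)"
    and local_min: "\<exists>e>0. \<forall>\<eta>. dist \<eta> \<eta>t < e \<longrightarrow>
                       sq_err (mu \<theta>) (qU \<theta>) (qO \<theta>) pol dpi \<eta>t \<theta> \<le> sq_err (mu \<theta>) (qU \<theta>) (qO \<theta>) pol dpi \<eta> \<theta>"
  shows "matrix_inv (fisher_G (mu \<theta>) pol dpi \<theta>) *v dq = \<eta>t"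
proof -
  define w where "w = (\<lambda>(s, o', a). mu \<theta> s o' * pol o' s a \<theta>)"
  define x where "x = (\<lambda>(s, o', a). grad_log_pi pol dpi o' s a \<theta>)"
  define y where "y = (\<lambda>(s, o', a). qU \<theta> s o' a - qO \<theta> s o')"
  have score_mean_0: "(\<Sum>a\<in>UNIV. dpi o' s a \<theta>) = 0" for o' s
    using pi_diff pi_sum by (rule sum_gradients_eq_0_if_sum_const)
  have "dq = (\<Sum>s\<in>UNIV. \<Sum>o'\<in>UNIV. \<Sum>a\<in>UNIV.
      (mu \<theta> s o' * pol o' s a \<theta> * (qU \<theta> s o' a - qO \<theta> s o')) *\<^sub>R grad_log_pi pol dpi o' s a \<theta>)"
    unfolding pg_thm
    by (rule intra_option_gradient_advantage_form) (metis pi_pos less_irrefl, fact score_mean_0)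
  then have dq_eq: "dq = (\<Sum>k\<in>UNIV. (w k * y k) *\<^sub>R x k)"
    unfolding w_def x_def y_def sum_UNIV_prod3 by simp
  have G_eq: "fisher_G (mu \<theta>) pol dpi \<theta> = (\<chi> i j. \<Sum>k\<in>UNIV. w k * x k $ i * x k $ j)"
    unfolding fisher_G_def w_def x_def sum_UNIV_prod3
    by (simp add: sum_distrib_left mult.assoc)
  have "sq_err (mu \<theta>) (qU \<theta>) (qO \<theta>) pol dpi \<eta> \<theta> = (\<Sum>k\<in>UNIV. w k * (\<eta> \<bullet> x k - y k)\<^sup>2)" for \<eta>
    unfolding sq_err_def compat_fa_def w_def x_def y_def sum_UNIV_prod3
    by simp
  then have "eventually (\<lambda>\<eta>. (\<Sum>k\<in>UNIV. w k * (\<eta>t \<bullet> x k - y k)\<^sup>2) \<le> (\<Sum>k\<in>UNIV. w k * (\<eta> \<bullet> x k - y k)\<^sup>2)) (at \<eta>t)"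
    using local_min unfolding eventually_at by (metis dist_commute)
  then have "(\<Sum>k\<in>UNIV. (w k * (\<eta>t \<bullet> x k - y k)) *\<^sub>R x k) = 0"
    by (rule least_squares_normal_equation)
  then have "fisher_G (mu \<theta>) pol dpi \<theta> *v \<eta>t = dq"
    unfolding G_eq dq_eq weighted_gram_matrix_mult_vector
    by (simp add: right_diff_distrib scaleR_diff_left sum_subtractf)
  then show ?thesis
    using G_inv by (intro matrix_inv_mult_vector_eq)
qed

end
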